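(* For $\epsilon,\delta\ge 0$ and a set $X$, let $\mathsf{DPR}(\epsilon,\delta)(X)$ be the set $D X$ with the relation $\mu\sim\nu$ iff for all $S\subseteq X$, $\mu(S)\le e^{\epsilon}\nu(S)+\delta$ and $\nu(S)\le e^{\epsilon}\mu(S)+\delta$. Then $\mathsf{DPR}$, viewed as a map $\mathbb{R}_{\ge0}\times\mathbb{R}_{\ge0}\to\mathbf{Ord}(q,D)$, is an $(\mathbb{R}^+_{\ge0}\times\mathbb{R}^+_{\ge0})$-graded $\times$-parameterized assignment of $\mathsf{RSRel}$ on the distribution monad $\mathcal{D}$. Concretely: $\mathsf{DPR}$ is monotone (if $\epsilon\le\epsilon'$, $\delta\le\delta'$ then $\mu\sim_{\mathsf{DPR}(\epsilon,\delta)(X)}\nu$ implies $\mu\sim_{\mathsf{DPR}(\epsilon',\delta')(X)}\nu$), and for all sets $X,Y$, all $\epsilon,\delta,\epsilon',\delta'\ge0$, all $f,g:X\to D Y$ with $f(x)\sim_{\mathsf{DPR}(\epsilon',\delta')(Y)}g(x)$ for every $x\in X$, and all $\mu\sim_{\mathsf{DPR}(\epsilon,\delta)(X)}\nu$, we have $f^\dagger(\mu)\sim_{\mathsf{DPR}(\epsilon+\epsilon',\delta+\delta')(Y)}g^\dagger(\nu)$.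
   Context: $D X$ is the set of discrete probability distributions on $X$ (functions $\mu:X\to[0,1]$ with countable support summing to $1$), $\mu(S)=\sum_{x\in S}\mu(x)$, and for $f:X\to D Y$, $f^\dagger(\mu)(y)=\sum_x f(x)(y)\mu(x)$. $\mathsf{RSRel}$ is the category whose objects are sets with a reflexive symmetric relation and whose morphisms are relation-preserving functions; $q:\mathsf{RSRel}\to\mathsf{Set}$ is the forgetful functor. $\mathbf{Ord}(q,D)$ is the class of maps assigning to each set $X$ a reflexive symmetric relation on $D X$. $\mathbb{R}^+_{\ge0}$ is the additive monoid of nonnegative reals with the usual order, and the product monoid is ordered componentwise. In $\mathsf{RSRel}$ (with product $(x,y)\sim(x',y')$ iff $x\sim x'$ and $y\sim y'$), for a set $X$ and object $Z$, $X\dot\pitchfork Z$ is the set of functions $X\to|Z|$ with $h\sim h'$ iff $h(x)\sim h'(x)$ for all $x$; a graded $\times$-parameterized assignment $\Delta$ requires that $(h,\mu)\mapsto h^\dagger(\mu)$ be relation-preserving $(X\dot\pitchfork\Delta\alpha Y)\times\Delta\beta X\to\Delta(\beta\cdot\alpha)Y$ for all grades, with $\Delta$ monotone in the grade. *)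

theory Defs
  imports "HOL-Probability.Probability_Mass_Function"
begin

text \<open>Discrete distributions D X are modelled by the library type 'a pmf;
  mu(S) is measure_pmf.prob mu S, and the Kleisli extension f-dagger(mu) is bind_pmf mu f.\<close>

definition DPR :: "real \<Rightarrow> real \<Rightarrow> 'a pmf \<Rightarrow> 'a pmf \<Rightarrow> bool" where
  "DPR eps del mu nu \<longleftrightarrow>
     (\<forall>S. measure_pmf.prob mu S \<le> exp eps * measure_pmf.prob nu S + del \<and>
          measure_pmf.prob nu S \<le> exp eps * measure_pmf.prob mu S + del)"

end

theory Submission
  imports Defs
begin

text \<open>The one-sided bound extends from indicators to
  all \<open>[0,1]\<close>-valued test functions \<open>h\<close>, \<open>E\<^sub>\<mu> h \<le> c E\<^sub>\<nu> h + d\<close>, because the total excess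
  \<open>\<Sum>\<^sub>x (\<mu>(x) - c \<nu>(x))\<^sup>+\<close> equals \<open>\<mu>(T) - c \<nu>(T) \<le> d\<close> for \<open>T = {x. \<mu>(x) > c \<nu>(x)}\<close>.
  Now \<open>f\<^sup>\<dagger>(\<mu>)(S)\<close> is the \<open>\<mu>\<close>-expectation of \<open>x \<mapsto> f(x)(S) \<le> min 1 (c' g(x)(S)) + d'\<close>, and the
  test-function bound applied to the truncated term yields
  \<open>f\<^sup>\<dagger>(\<mu>)(S) \<le> c c' g\<^sup>\<dagger>(\<nu>)(S) + d + d'\<close>.\<close>

definition prob_le_affine :: "real \<Rightarrow> real \<Rightarrow> 'a pmf \<Rightarrow> 'a pmf \<Rightarrow> bool" where
  "prob_le_affine c d mu nu \<longleftrightarrow>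
     (\<forall>S. measure_pmf.prob mu S \<le> c * measure_pmf.prob nu S + d)"

lemma DPR_iff_prob_le_affine:
  "DPR eps del mu nu \<longleftrightarrow>
     prob_le_affine (exp eps) del mu nu \<and> prob_le_affine (exp eps) del nu mu"
  unfolding DPR_def prob_le_affine_def by blast

lemma prob_le_affine_refl:
  assumes "1 \<le> c" and "0 \<le> d"
  shows "prob_le_affine c d mu mu"
  unfolding prob_le_affine_def
proof
  fix S
  have "measure_pmf.prob mu S \<le> c * measure_pmf.prob mu S"
    using mult_right_mono[OF assms(1) measure_nonneg] by simp
  then show "measure_pmf.prob mu S \<le> c * measure_pmf.prob mu S + d"
    using assms(2) by linarith
qed

lemma prob_le_affine_mono:
  assumes "prob_le_affine c d mu nu" and "c \<le> c'" and "d \<le> d'"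
  shows "prob_le_affine c' d' mu nu"
  unfolding prob_le_affine_def
proof
  fix S
  have "c * measure_pmf.prob nu S \<le> c' * measure_pmf.prob nu S"
    using assms(2) by (rule mult_right_mono) simp
  then show "measure_pmf.prob mu S \<le> c' * measure_pmf.prob nu S + d'"
    using assms(1,3) unfolding prob_le_affine_def by (smt (verit))
qed

lemma integral_measure_pmf_count_space:
  fixes h :: "'a \<Rightarrow> real"
  shows "(\<integral>x. h x \<partial>measure_pmf p) = (\<integral>x. pmf p x * h x \<partial>count_space UNIV)"
  by (simp add: measure_pmf_eq_density integral_density pmf_nonneg)

lemma prob_pmf_count_space:
  "measure_pmf.prob p S = (\<integral>x. pmf p x * indicator S x \<partial>count_space UNIV)"
  by (simp flip: integral_measure_pmf_count_space)

lemma integrable_pmf_times_bounded: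
  fixes h :: "'a \<Rightarrow> real"
  assumes "\<And>x. \<bar>h x\<bar> \<le> 1"
  shows "integrable (count_space UNIV) (\<lambda>x. pmf p x * h x)"
proof (rule Bochner_Integration.integrable_bound[OF integrable_pmf[of UNIV p]])
  show "AE x in count_space UNIV. norm (pmf p x * h x) \<le> norm (pmf p x)"
    using assms by (auto simp: abs_mult intro!: mult_left_le)
qed simp

lemma expectation_le_affine:
  fixes h :: "'a \<Rightarrow> real"
  assumes "0 \<le> c" and "prob_le_affine c d mu nu"
    and h_nonneg: "\<And>x. 0 \<le> h x" and h_le_1: "\<And>x. h x \<le> 1"
  shows "measure_pmf.expectation mu h \<le> c * measure_pmf.expectation nu h + d"
proof -
  define T where "T = {x. c * pmf nu x < pmf mu x}"
  let ?M = "count_space UNIV :: 'a measure"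
  have pointwise: "pmf mu x * h x
      \<le> c * (pmf nu x * h x) + (pmf mu x * indicator T x - c * (pmf nu x * indicator T x))" for x
  proof (cases "x \<in> T")
    case True
    then have "0 \<le> (pmf mu x - c * pmf nu x) * (1 - h x)"
      using h_le_1[of x] by (simp add: T_def)
    then show ?thesis using True by (simp add: algebra_simps)
  next
    case False
    then have "pmf mu x * h x \<le> c * pmf nu x * h x"
      using h_nonneg[of x] by (intro mult_right_mono) (simp_all add: T_def)
    then show ?thesis using False by simp
  qed
  have "\<bar>h x\<bar> \<le> 1" "\<bar>indicator T x :: real\<bar> \<le> 1" for x
    using h_nonneg[of x] h_le_1[of x] by (auto simp: indicator_def)
  then have integrable: "integrable ?M (\<lambda>x. pmf p x * h x)"
      "integrable ?M (\<lambda>x. pmf p x * indicator T x)" for p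
    by (simp_all add: integrable_pmf_times_bounded)
  have "measure_pmf.expectation mu h = (\<integral>x. pmf mu x * h x \<partial>?M)"
    by (rule integral_measure_pmf_count_space)
  also have "\<dots> \<le> (\<integral>x. c * (pmf nu x * h x)
      + (pmf mu x * indicator T x - c * (pmf nu x * indicator T x)) \<partial>?M)"
    using pointwise integrable by (intro integral_mono) auto
  also have "\<dots> = c * (\<integral>x. pmf nu x * h x \<partial>?M)
      + ((\<integral>x. pmf mu x * indicator T x \<partial>?M) - c * (\<integral>x. pmf nu x * indicator T x \<partial>?M))"
    using integrable by simp
  also have "\<dots> = c * measure_pmf.expectation nu h
      + (measure_pmf.prob mu T - c * measure_pmf.prob nu T)"
    by (simp add: integral_measure_pmf_count_space prob_pmf_count_space)
  also have "\<dots> \<le> c * measure_pmf.expectation nu h + d"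
    using assms(2) unfolding prob_le_affine_def by (smt (verit))
  finally show ?thesis .
qed

lemma prob_bind_pmf:
  "measure_pmf.prob (bind_pmf mu f) S = measure_pmf.expectation mu (\<lambda>x. measure_pmf.prob (f x) S)"
  unfolding measure_pmf_bind
  by (rule measure_pmf.measure_bind) (use measurable_measure_pmf[of f] in auto)

lemma prob_le_affine_bind_pmf:
  assumes "0 \<le> c" and "0 \<le> c'" and "0 \<le> d'"
    and "prob_le_affine c d mu nu" and fg: "\<And>x. prob_le_affine c' d' (f x) (g x)"
  shows "prob_le_affine (c * c') (d + d') (bind_pmf mu f) (bind_pmf nu g)"
  unfolding prob_le_affine_def
proof
  fix S
  define a where "a x = measure_pmf.prob (f x) S" for x
  define b where "b x = measure_pmf.prob (g x) S" for x
  define h where "h x = min 1 (c' * b x)" for x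
  have a_le: "a x \<le> h x + d'" for x
    using fg[of x] \<open>0 \<le> d'\<close> unfolding prob_le_affine_def a_def b_def h_def
    by (smt (verit) measure_pmf.prob_le_1)
  have "0 \<le> h x" "h x \<le> 1" "0 \<le> b x" "b x \<le> 1" for x
    using \<open>0 \<le> c'\<close> unfolding h_def b_def by auto
  moreover have "\<bar>a x\<bar> \<le> 1" for x
    unfolding a_def by simp
  ultimately have integrable: "integrable (measure_pmf p) k" if "k \<in> {a, b, h}" for p k
    using that by (auto intro!: measure_pmf.integrable_const_bound[where B=1])
  have "measure_pmf.prob (bind_pmf mu f) S = measure_pmf.expectation mu a"
    unfolding prob_bind_pmf a_def ..
  also have "\<dots> \<le> measure_pmf.expectation mu (\<lambda>x. h x + d')"
    using integrable a_le by (intro integral_mono) auto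
  also have "\<dots> = measure_pmf.expectation mu h + d'"
    using integrable by simp
  also have "\<dots> \<le> c * measure_pmf.expectation nu h + d + d'"
    using expectation_le_affine[of c d mu nu h] assms \<open>\<And>x. 0 \<le> h x\<close> \<open>\<And>x. h x \<le> 1\<close>
    by simp
  also have "\<dots> \<le> c * measure_pmf.expectation nu (\<lambda>x. c' * b x) + d + d'"
    using integrable \<open>0 \<le> c\<close> by (intro add_right_mono mult_left_mono integral_mono) (auto simp: h_def)
  also have "\<dots> = c * (c' * measure_pmf.prob (bind_pmf nu g) S) + d + d'"
    unfolding prob_bind_pmf b_def by simp
  finally show "measure_pmf.prob (bind_pmf mu f) S
      \<le> c * c' * measure_pmf.prob (bind_pmf nu g) S + (d + d')"
    by simp
qed

theorem proposition2:
  shows "(\<forall>eps del. 0 \<le> eps \<longrightarrow> 0 \<le> del \<longrightarrow>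
            (\<forall>mu :: 'a pmf. DPR eps del mu mu) \<and>
            (\<forall>mu nu :: 'a pmf. DPR eps del mu nu \<longrightarrow> DPR eps del nu mu))
       \<and> (\<forall>eps del eps' del' (mu :: 'a pmf) nu.
            0 \<le> eps \<longrightarrow> 0 \<le> del \<longrightarrow> eps \<le> eps' \<longrightarrow> del \<le> del' \<longrightarrow>
            DPR eps del mu nu \<longrightarrow> DPR eps' del' mu nu)
       \<and> (\<forall>eps del eps' del' (f :: 'a \<Rightarrow> 'b pmf) g (mu :: 'a pmf) nu.
            0 \<le> eps \<longrightarrow> 0 \<le> del \<longrightarrow> 0 \<le> eps' \<longrightarrow> 0 \<le> del' \<longrightarrow>
            (\<forall>x. DPR eps' del' (f x) (g x)) \<longrightarrow>
            DPR eps del mu nu \<longrightarrow>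
            DPR (eps + eps') (del + del') (bind_pmf mu f) (bind_pmf nu g))"
proof (intro conjI allI impI)
  fix eps del :: real and mu nu :: "'a pmf"
  assume "0 \<le> eps" "0 \<le> del"
  then show "DPR eps del mu mu"
    by (simp add: DPR_iff_prob_le_affine prob_le_affine_refl)
  show "DPR eps del mu nu \<Longrightarrow> DPR eps del nu mu"
    by (simp add: DPR_iff_prob_le_affine)
next
  fix eps del eps' del' :: real and mu nu :: "'a pmf"
  assume "eps \<le> eps'" "del \<le> del'" "DPR eps del mu nu"
  then show "DPR eps' del' mu nu"
    by (auto simp: DPR_iff_prob_le_affine intro: prob_le_affine_mono)
next
  fix eps del eps' del' :: real and f g :: "'a \<Rightarrow> 'b pmf" and mu nu :: "'a pmf"
  assume "0 \<le> del'" "\<forall>x. DPR eps' del' (f x) (g x)" "DPR eps del mu nu"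
  then show "DPR (eps + eps') (del + del') (bind_pmf mu f) (bind_pmf nu g)"
    by (simp add: DPR_iff_prob_le_affine exp_add prob_le_affine_bind_pmf)
qed

end
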